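(* Let $\delta\in(0,1)$ and let $G$ be the three-vertex star (path on three vertices) with vertex set $V=\{S,R,W\}$, where the roles of sender $S$, receiver $R$ and the single witness $W$ are assigned to the three vertices in any of the possible ways, and let $\mathcal H=\{\{i,j\}:\{i,j\}\in E(G)\}$. Then the effective bias of the conference $V$ with witness set $\{W\}$ equals $$b_{\mathrm{eff}}=\frac{b^S_R+b^S_W+b^W_R}{2}=\delta+\delta^2,$$ for every assignment of roles. Consequently $N(\delta+\delta^2)\le N(\delta)$ and $N(\delta+\delta^2)\le N(\delta+\tfrac23\delta^2)$: the presence of the witness weakly reduces the number of equilibrium partitions relative to a two-player bias $\delta$ and relative to the private-conversation bias $\delta+\tfrac23\delta^2$.
   Context: For a finite simple undirected graph $G=(V,E)$ and $\delta\in(0,1)$: $v^G(S):=\sum_{i\in S}\sum_{j\in S,\,j\neq i}\delta^{t_{ij}(G[S])}$ for $S\subseteq V$, where $t_{ij}(G[S])$ is the distance in the induced subgraph ($\infty$ if disconnected, $\delta^\infty:=0$). For a conference structure $\mathcal H$ and $C\subseteq V$, $C/\mathcal H$ is the partition of $C$ into classes connected via chains of pairwise-intersecting members of $\mathcal H$ contained in $C$; $r^{v^G}_{\mathcal H}(C):=\sum_{B\in C/\mathcal H}v^G(B)$; for $X\subseteq V$, $\mathcal H|_X:=\{H\in\mathcal H:H\subseteq X\}$. $\mu_j(X;u)$ denotes the Shapley value of player $j$ in the TU game $u$ on player set $X$. Bargaining-power components: $b^j_i:=\mu_j(V;r^{v^G}_{\mathcal H})-\mu_j(V\setminus\{i\};r^{v^G}_{\mathcal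 H|_{V\setminus\{i\}}})$. Effective bias with sender $S$, receiver $R$, witness set $W$: $b_{\mathrm{eff}}:=\bigl(b^S_R+\sum_{w\in W}(b^S_w+b^w_R)\bigr)/(|W|+1)$. For $b>0$, $N(b)$ denotes the unique integer $N\ge1$ with $\beta(N)\le b<\beta(N-1)$, where $\beta(N)=\frac1{2N(N+1)}$ and $\beta(0)=+\infty$ (the number of intervals of the Pareto-superior Crawford–Sobel partition equilibrium with bias $b$); $N$ is non-increasing in $b$. *)

theory Defs
  imports Complex_Main
begin

text \<open>Simple undirected graphs are given by a set E of two-element vertex sets (edges).
  A walk of length n from i to j in the induced subgraph G[S]:\<close>
definition walk_in :: "'a set set \<Rightarrow> 'a set \<Rightarrow> 'a \<Rightarrow> 'a \<Rightarrow> nat \<Rightarrow> bool" where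
  "walk_in E S i j n \<longleftrightarrow> (\<exists>xs. length xs = Suc n \<and> hd xs = i \<and> last xs = j \<and> set xs \<subseteq> S \<and>
       (\<forall>k<n. {xs ! k, xs ! Suc k} \<in> E))"

text \<open>delta to the power of the distance t_ij(G[S]); 0 if disconnected (delta^infinity = 0).\<close>
definition dpow :: "real \<Rightarrow> 'a set set \<Rightarrow> 'a set \<Rightarrow> 'a \<Rightarrow> 'a \<Rightarrow> real" where
  "dpow \<delta> E S i j = (if \<exists>n. walk_in E S i j n then \<delta> ^ (LEAST n. walk_in E S i j n) else 0)"

definition vG :: "real \<Rightarrow> 'a set set \<Rightarrow> 'a set \<Rightarrow> real" where
  "vG \<delta> E S = (\<Sum>i\<in>S. \<Sum>j\<in>S - {i}. dpow \<delta> E S i j)"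

text \<open>C/H: classes of C connected via chains of pairwise-intersecting members of H contained in C.\<close>
definition conf_rel :: "'a set set \<Rightarrow> 'a set \<Rightarrow> ('a \<times> 'a) set" where
  "conf_rel H C = Id_on C \<union> {(x, y). \<exists>h\<in>H. h \<subseteq> C \<and> x \<in> h \<and> y \<in> h}\<^sup>+"

definition conf_part :: "'a set \<Rightarrow> 'a set set \<Rightarrow> 'a set set" where
  "conf_part C H = C // conf_rel H C"

definition rgame :: "real \<Rightarrow> 'a set set \<Rightarrow> 'a set set \<Rightarrow> 'a set \<Rightarrow> real" where
  "rgame \<delta> E H C = (\<Sum>B\<in>conf_part C H. vG \<delta> E B)"

definition restr :: "'a set set \<Rightarrow> 'a set \<Rightarrow> 'a set set" where
  "restr H X = {h \<in> H. h \<subseteq> X}"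

definition shapley :: "'a \<Rightarrow> 'a set \<Rightarrow> ('a set \<Rightarrow> real) \<Rightarrow> real" where
  "shapley j X u = (\<Sum>T\<in>Pow (X - {j}).
     (fact (card T) * fact (card X - card T - 1) / fact (card X)) * (u (insert j T) - u T))"

definition bpow :: "real \<Rightarrow> 'a set set \<Rightarrow> 'a set set \<Rightarrow> 'a set \<Rightarrow> 'a \<Rightarrow> 'a \<Rightarrow> real" where
  "bpow \<delta> E H V j i = shapley j V (rgame \<delta> E H) - shapley j (V - {i}) (rgame \<delta> E (restr H (V - {i})))"

definition b_eff :: "real \<Rightarrow> 'a set set \<Rightarrow> 'a set set \<Rightarrow> 'a set \<Rightarrow> 'a \<Rightarrow> 'a \<Rightarrow> 'a set \<Rightarrow> real" where
  "b_eff \<delta> E H V S R W = (bpow \<delta> E H V S R + (\<Sum>w\<in>W. bpow \<delta> E H V S w + bpow \<delta> E H V w R))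
      / (real (card W) + 1)"

text \<open>Crawford--Sobel: beta N = 1/(2N(N+1)) for N >= 1, beta 0 = +infinity.\<close>
definition cs_beta :: "nat \<Rightarrow> real" where
  "cs_beta N = 1 / (2 * real N * (real N + 1))"

definition cs_N :: "real \<Rightarrow> nat" where
  "cs_N b = (THE N. N \<ge> 1 \<and> cs_beta N \<le> b \<and> (N = 1 \<or> b < cs_beta (N - 1)))"

end

(*
  On the path a - b - c with the edges as conferences, the conference game gives 2 delta to
  each edge coalition, 4 delta + 2 delta^2 to the whole path and nothing otherwise.  Its Shapley
  value is delta + 2/3 delta^2 for the endpoints and 2 delta + 2/3 delta^2 for the centre; deleting
  an endpoint leaves a single-edge game worth delta to each side, deleting the centre leaves
  nothing.  Hence b^j_i = delta [ij is an edge] + 2/3 delta^2 depends only on the unordered pair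
  {i, j}.  The pairs (S, R), (S, W), (W, R) meet every pair of vertices exactly once, so whatever
  the roles they contribute the two edges and three times 2/3 delta^2, i.e. 2 (delta + delta^2).
  The comparisons of N follow because N is antitone in the bias and delta^2 > 0.
*)
theory Submission
  imports Defs
begin

lemma walk_in_0_iff: "walk_in E S i j 0 \<longleftrightarrow> i = j \<and> i \<in> S"
proof
  assume "walk_in E S i j 0"
  then obtain xs where "length xs = 1" "hd xs = i" "last xs = j" "set xs \<subseteq> S"
    unfolding walk_in_def by auto
  then show "i = j \<and> i \<in> S"
    by (cases xs) auto
qed (auto simp: walk_in_def intro!: exI[of _ "[i]"])

lemma walk_in_Suc_0_iff: "walk_in E S i j (Suc 0) \<longleftrightarrow> {i, j} \<in> E \<and> i \<in> S \<and> j \<in> S"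
proof
  assume "walk_in E S i j (Suc 0)"
  then obtain xs where xs: "length xs = Suc (Suc 0)" "hd xs = i" "last xs = j" "set xs \<subseteq> S"
      "{xs ! 0, xs ! Suc 0} \<in> E"
    unfolding walk_in_def by auto
  then obtain x y where "xs = [x, y]"
    by (metis length_0_conv length_Suc_conv)
  with xs show "{i, j} \<in> E \<and> i \<in> S \<and> j \<in> S"
    by auto
qed (auto simp: walk_in_def intro!: exI[of _ "[i, j]"])

lemma walk_in_2I:
  assumes "{i, k} \<in> E" "{k, j} \<in> E" "i \<in> S" "k \<in> S" "j \<in> S"
  shows "walk_in E S i j 2"
  unfolding walk_in_def using assms
  by (intro exI[of _ "[i, k, j]"]) (auto simp: less_Suc_eq numeral_2_eq_2)

lemma dpow_eq_power:
  assumes "walk_in E S i j n" "\<And>m. m < n \<Longrightarrow> \<not> walk_in E S i j m"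
  shows "dpow \<delta> E S i j = \<delta> ^ n"
proof -
  have "(LEAST m. walk_in E S i j m) = n"
    using assms by (intro Least_equality) (auto simp: not_less[symmetric])
  with assms(1) show ?thesis
    unfolding dpow_def by auto
qed

lemma dpow_adjacent:
  assumes "{i, j} \<in> E" "i \<in> S" "j \<in> S" "i \<noteq> j"
  shows "dpow \<delta> E S i j = \<delta>"
proof -
  have "dpow \<delta> E S i j = \<delta> ^ 1"
    using assms by (intro dpow_eq_power) (auto simp: walk_in_Suc_0_iff walk_in_0_iff)
  then show ?thesis
    by simp
qed

lemma dpow_distance_two:
  assumes "{i, k} \<in> E" "{k, j} \<in> E" "{i, j} \<notin> E" "i \<in> S" "k \<in> S" "j \<in> S" "i \<noteq> j"
  shows "dpow \<delta> E S i j = \<delta>\<^sup>2"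
proof (rule dpow_eq_power)
  show "walk_in E S i j 2"
    using assms by (intro walk_in_2I)
  show "\<not> walk_in E S i j m" if "m < 2" for m
    using that assms walk_in_Suc_0_iff[of E S i j] by (auto simp: less_2_cases_iff walk_in_0_iff)
qed

lemma vG_singleton: "vG \<delta> E {x} = 0"
  by (simp add: vG_def)

lemma vG_edge:
  assumes "{x, y} \<in> E" "x \<noteq> y"
  shows "vG \<delta> E {x, y} = 2 * \<delta>"
proof -
  have "dpow \<delta> E {x, y} x y = \<delta>" "dpow \<delta> E {x, y} y x = \<delta>"
    using assms by (auto intro!: dpow_adjacent simp: insert_commute)
  with assms show ?thesis
    by (simp add: vG_def insert_Diff_if)
qed

lemma vG_path3:
  assumes "distinct [a, b, c]" "{a, b} \<in> E" "{b, c} \<in> E" "{a, c} \<notin> E"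
  shows "vG \<delta> E {a, b, c} = 4 * \<delta> + 2 * \<delta>\<^sup>2"
proof -
  have "dpow \<delta> E {a, b, c} a b = \<delta>" "dpow \<delta> E {a, b, c} b a = \<delta>"
    "dpow \<delta> E {a, b, c} b c = \<delta>" "dpow \<delta> E {a, b, c} c b = \<delta>"
    using assms by (auto intro!: dpow_adjacent simp: insert_commute)
  moreover have "dpow \<delta> E {a, b, c} a c = \<delta>\<^sup>2" "dpow \<delta> E {a, b, c} c a = \<delta>\<^sup>2"
    using assms by (auto intro!: dpow_distance_two[where k = b] simp: insert_commute)
  moreover have "b \<noteq> a" "c \<noteq> a" "c \<noteq> b"
    using assms(1) by auto
  ultimately show ?thesis
    using assms by (simp add: vG_def insert_Diff_if)
qed

lemma conf_rel_subset: "conf_rel H C \<subseteq> C \<times> C"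
proof -
  have "{(x, y). \<exists>h\<in>H. h \<subseteq> C \<and> x \<in> h \<and> y \<in> h}\<^sup>+ \<subseteq> C \<times> C"
    by (rule trancl_subset_Sigma) auto
  then show ?thesis
    unfolding conf_rel_def by auto
qed

lemma conf_rel_if_conference:
  "h \<in> H \<Longrightarrow> h \<subseteq> C \<Longrightarrow> x \<in> h \<Longrightarrow> y \<in> h \<Longrightarrow> (x, y) \<in> conf_rel H C"
  unfolding conf_rel_def by (blast intro: r_into_trancl)

lemma trans_conf_rel: "trans (conf_rel H C)"
  unfolding conf_rel_def trans_def by (auto intro: trancl_trans)

lemma rgame_eq_0_if_no_conference:
  assumes "\<forall>h\<in>H. \<not> h \<subseteq> C"
  shows "rgame \<delta> E H C = 0"
proof -
  have "conf_rel H C = Id_on C"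
    using assms unfolding conf_rel_def by auto
  then have "B \<in> conf_part C H \<Longrightarrow> \<exists>x. B = {x}" for B
    unfolding conf_part_def quotient_def by auto
  then show ?thesis
    unfolding rgame_def by (metis sum.neutral vG_singleton)
qed

lemma rgame_eq_vG_if_connected:
  assumes "C \<noteq> {}" "C \<times> C \<subseteq> conf_rel H C"
  shows "rgame \<delta> E H C = vG \<delta> E C"
proof -
  have "conf_rel H C = C \<times> C"
    using assms(2) conf_rel_subset by blast
  with assms(1) have "conf_part C H = {C}"
    unfolding conf_part_def quotient_def by auto
  then show ?thesis
    by (simp add: rgame_def)
qed

lemma rgame_edge:
  assumes "{x, y} \<in> H" "{x, y} \<in> E" "x \<noteq> y"
  shows "rgame \<delta> E H {x, y} = 2 * \<delta>"
  using assms
  by (subst rgame_eq_vG_if_connected) (auto intro: conf_rel_if_conference simp: vG_edge)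

lemma shapley_two:
  assumes "x \<noteq> y"
  shows "shapley x {x, y} u = ((u {x} - u {}) + (u {x, y} - u {y})) / 2"
proof -
  have "{x, y} - {x} = {y}"
    using assms by auto
  with assms show ?thesis
    unfolding shapley_def by (simp add: Pow_insert field_simps)
qed

lemma shapley_three:
  assumes "distinct [x, y, z]"
  shows "shapley x {x, y, z} u = (2 * (u {x} - u {}) + (u {x, y} - u {y}) + (u {x, z} - u {z})
    + 2 * (u {x, y, z} - u {y, z})) / 6"
proof -
  have others: "{x, y, z} - {x} = {y, z}"
    using assms by auto
  have coalitions: "Pow {y, z} = {{}, {y}, {z}, {y, z}}"
    by (auto simp: subset_insert_iff)
  have sum_coalitions: "sum f {{}, {y}, {z}, {y, z}} = f {} + f {y} + f {z} + f {y, z}" for f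
    using assms by (auto simp: add.assoc)
  show ?thesis
    using assms unfolding shapley_def others coalitions sum_coalitions
    by (simp add: insert_commute eval_nat_numeral field_simps)
qed

lemma shapley_rgame_no_conferences: "shapley j X (rgame \<delta> E {}) = 0"
  by (simp add: shapley_def rgame_eq_0_if_no_conference)

lemma shapley_rgame_single_edge:
  assumes "{x, y} \<in> E" "x \<noteq> y" "z \<in> {x, y}"
  shows "shapley z {x, y} (rgame \<delta> E {{x, y}}) = \<delta>"
proof -
  have "shapley x {x, y} (rgame \<delta> E {{x, y}}) = \<delta>" if "{x, y} \<in> E" "x \<noteq> y" for x y
    using that by (simp add: shapley_two rgame_edge rgame_eq_0_if_no_conference)
  from this[of x y] this[of y x] assms show ?thesis
    by (auto simp: insert_commute)
qed

lemma cs_beta_antimono: "1 \<le> m \<Longrightarrow> m \<le> n \<Longrightarrow> cs_beta n \<le> cs_beta m"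
  unfolding cs_beta_def by (intro divide_left_mono mult_mono) auto

lemma ex_cs_beta_le:
  assumes "0 < b"
  shows "\<exists>N\<ge>1. cs_beta N \<le> b"
proof -
  obtain n where n: "inverse (real (Suc n)) < b"
    using reals_Archimedean assms by blast
  have "cs_beta (Suc n) \<le> inverse (real (Suc n))"
    unfolding cs_beta_def inverse_eq_divide
    by (intro divide_left_mono mult_pos_pos) (auto simp: algebra_simps)
  with n show ?thesis
    by (intro exI[of _ "Suc n"]) auto
qed

lemma cs_N_eq_Least:
  assumes "0 < b"
  shows "cs_N b = (LEAST N. 1 \<le> N \<and> cs_beta N \<le> b)"
  unfolding cs_N_def
proof (rule the_equality)
  define L where "L = (LEAST N. 1 \<le> N \<and> cs_beta N \<le> b)"
  have L: "1 \<le> L" "cs_beta L \<le> b"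
    using LeastI_ex[OF ex_cs_beta_le[OF assms]] unfolding L_def by auto
  have "\<not> (1 \<le> L - 1 \<and> cs_beta (L - 1) \<le> b)" if "L \<noteq> 1"
    using L(1) that unfolding L_def
    by (intro not_less_Least[where P = "\<lambda>N. 1 \<le> N \<and> cs_beta N \<le> b"]) simp
  with L show "1 \<le> L \<and> cs_beta L \<le> b \<and> (L = 1 \<or> b < cs_beta (L - 1))"
    by (cases "L = 1") auto
  fix N assume N: "1 \<le> N \<and> cs_beta N \<le> b \<and> (N = 1 \<or> b < cs_beta (N - 1))"
  then have "L \<le> N"
    unfolding L_def by (intro Least_le) auto
  moreover have "\<not> L < N"
  proof
    assume "L < N"
    then have "cs_beta (N - 1) \<le> cs_beta L"
      using L(1) by (intro cs_beta_antimono) auto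
    with \<open>L < N\<close> N L show False
      by auto
  qed
  ultimately show "N = L"
    by simp
qed

lemma cs_N_antimono:
  assumes "0 < b" "b \<le> b'"
  shows "cs_N b' \<le> cs_N b"
proof -
  have "1 \<le> cs_N b \<and> cs_beta (cs_N b) \<le> b"
    using LeastI_ex[OF ex_cs_beta_le[OF assms(1)]] cs_N_eq_Least[OF assms(1)] by simp
  then show ?thesis
    using assms cs_N_eq_Least[of b'] by (auto intro: Least_le)
qed

context
  fixes a b c :: 'a and E :: "'a set set"
  assumes distinct: "distinct [a, b, c]"
    and path_edges: "E = {{a, b}, {b, c}}"
begin

lemma path_vertices_ne: "a \<noteq> b" "a \<noteq> c" "b \<noteq> c" "b \<noteq> a" "c \<noteq> a" "c \<noteq> b"
  using distinct by auto

lemma path_edge_memberships: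
  "{a, b} \<in> E" "{b, a} \<in> E" "{b, c} \<in> E" "{c, b} \<in> E" "{a, c} \<notin> E" "{c, a} \<notin> E"
  using path_edges path_vertices_ne by (auto simp: doubleton_eq_iff)

lemma rgame_path:
  assumes "C \<subseteq> {a, b, c}"
  shows "rgame \<delta> E E C =
    (if {a, b, c} \<subseteq> C then 4 * \<delta> + 2 * \<delta>\<^sup>2
     else if {a, b} \<subseteq> C \<or> {b, c} \<subseteq> C then 2 * \<delta> else 0)"
proof -
  have "C \<in> Pow {a, b, c}"
    using assms by simp
  then have "C \<in> {{a, b, c}, {a, b}, {b, c}, {}, {a}, {b}, {c}, {a, c}}"
    by (simp add: Pow_insert insert_commute)
  then consider "C = {a, b, c}" | "C = {a, b}" | "C = {b, c}" | "\<forall>h\<in>E. \<not> h \<subseteq> C"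
    using distinct path_edges by auto
  then show ?thesis
  proof cases
    case 1
    have linked_to_b: "(x, b) \<in> conf_rel E C \<and> (b, x) \<in> conf_rel E C" if "x \<in> C" for x
      using that 1 path_edges conf_rel_if_conference[of "{a, b}" E C] conf_rel_if_conference[of "{b, c}" E C]
      by auto
    have "C \<times> C \<subseteq> conf_rel E C"
      using linked_to_b trans_conf_rel[of E C] by (auto elim: transE)
    with 1 distinct path_edges show ?thesis
      by (subst rgame_eq_vG_if_connected) (auto simp: vG_path3 doubleton_eq_iff)
  next
    case 2
    with path_edges show ?thesis
      by (simp add: rgame_edge path_vertices_ne)
  next
    case 3
    with path_edges show ?thesis
      by (simp add: rgame_edge path_vertices_ne)
  next
    case 4
    with path_edges show ?thesis
      by (auto simp: rgame_eq_0_if_no_conference)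
  qed
qed

lemma shapley_path:
  "shapley a {a, b, c} (rgame \<delta> E E) = \<delta> + 2 / 3 * \<delta>\<^sup>2"
  "shapley b {a, b, c} (rgame \<delta> E E) = 2 * \<delta> + 2 / 3 * \<delta>\<^sup>2"
  "shapley c {a, b, c} (rgame \<delta> E E) = \<delta> + 2 / 3 * \<delta>\<^sup>2"
proof -
  have bac: "{a, b, c} = {b, a, c}" and cab: "{a, b, c} = {c, a, b}"
    by auto
  show "shapley a {a, b, c} (rgame \<delta> E E) = \<delta> + 2 / 3 * \<delta>\<^sup>2"
    by (simp add: shapley_three rgame_path path_vertices_ne)
  show "shapley b {a, b, c} (rgame \<delta> E E) = 2 * \<delta> + 2 / 3 * \<delta>\<^sup>2"
    unfolding bac by (simp add: shapley_three rgame_path path_vertices_ne)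
  show "shapley c {a, b, c} (rgame \<delta> E E) = \<delta> + 2 / 3 * \<delta>\<^sup>2"
    unfolding cab by (simp add: shapley_three rgame_path path_vertices_ne)
qed

lemma bpow_path:
  assumes "i \<in> {a, b, c}" "j \<in> {a, b, c}" "i \<noteq> j"
  shows "bpow \<delta> E E {a, b, c} j i = (if {i, j} \<in> E then \<delta> else 0) + 2 / 3 * \<delta>\<^sup>2"
proof -
  have remove: "{a, b, c} - {a} = {b, c}" "{a, b, c} - {b} = {a, c}" "{a, b, c} - {c} = {a, b}"
    using path_vertices_ne by auto
  have restr: "restr E {b, c} = {{b, c}}" "restr E {a, c} = {}" "restr E {a, b} = {{a, b}}"
    using path_vertices_ne path_edges by (auto simp: restr_def)
  show ?thesis
    using assms unfolding bpow_def
    by (auto simp: remove restr shapley_path shapley_rgame_single_edge shapley_rgame_no_conferences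
        path_vertices_ne path_edge_memberships)
qed

lemma bpow_path_role_sum:
  assumes "distinct [S, R, W]" "{S, R, W} = {a, b, c}"
  shows "bpow \<delta> E E {a, b, c} S R + bpow \<delta> E E {a, b, c} S W + bpow \<delta> E E {a, b, c} W R
    = 2 * \<delta> + 2 * \<delta>\<^sup>2"
proof -
  have roles: "S \<in> {a, b, c}" "R \<in> {a, b, c}" "W \<in> {a, b, c}"
    using assms(2) by auto
  show ?thesis
    using assms roles
    by (auto simp: bpow_path path_vertices_ne path_edge_memberships)
qed

end

theorem proposition2:
  fixes \<delta> :: real and a b c S R W :: 'a and V :: "'a set" and E H :: "'a set set"
  assumes "0 < \<delta>" "\<delta> < 1"
    and "distinct [a, b, c]"
    and "V = {a, b, c}"
    and "E = {{a, b}, {b, c}}"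
    and "H = {{i, j} | i j. {i, j} \<in> E}"
    and "distinct [S, R, W]" "{S, R, W} = V"
  shows "b_eff \<delta> E H V S R {W} = (bpow \<delta> E H V S R + bpow \<delta> E H V S W + bpow \<delta> E H V W R) / 2
    \<and> (bpow \<delta> E H V S R + bpow \<delta> E H V S W + bpow \<delta> E H V W R) / 2 = \<delta> + \<delta>\<^sup>2
    \<and> cs_N (\<delta> + \<delta>\<^sup>2) \<le> cs_N \<delta>
    \<and> cs_N (\<delta> + \<delta>\<^sup>2) \<le> cs_N (\<delta> + 2 / 3 * \<delta>\<^sup>2)"
proof (intro conjI)
  show "b_eff \<delta> E H V S R {W} = (bpow \<delta> E H V S R + bpow \<delta> E H V S W + bpow \<delta> E H V W R) / 2"
    unfolding b_eff_def by (simp add: add.assoc)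
  have "H = E"
    using assms(5,6) by blast
  then show "(bpow \<delta> E H V S R + bpow \<delta> E H V S W + bpow \<delta> E H V W R) / 2 = \<delta> + \<delta>\<^sup>2"
    using bpow_path_role_sum[OF assms(3,5,7)] assms(4,8) by simp
  have "0 < \<delta>\<^sup>2"
    using assms(1) by simp
  then show "cs_N (\<delta> + \<delta>\<^sup>2) \<le> cs_N \<delta>" "cs_N (\<delta> + \<delta>\<^sup>2) \<le> cs_N (\<delta> + 2 / 3 * \<delta>\<^sup>2)"
    using assms(1) by (intro cs_N_antimono; linarith)+
qed

end
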